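(* Fix $T>0$ and a continuous function $h$ on $[0,T]$ with $h(t)>0$. Assume that for every boundary function $s$ on $[0,T]$ the Fixed Boundary Neumann Problem with flux $h$ has a (classical) solution $U^s$. Let $\mathcal{R}$ be the Neumann boundary-update operator $$\mathcal{R}(s)(t)=\int_0^t h(z)\,dz-\int_0^{s(t)}U^s(x,t)\,dx,\qquad 0\le t\le T.$$ If $s_1,s_2$ are boundary functions with $s_1(t)\le s_2(t)$ for all $t\in[0,T]$, then $\mathcal{R}(s_1)(t)\ge \mathcal{R}(s_2)(t)$ for all $t\in[0,T]$.
   Context: A boundary function on $[0,T]$ is a function $s\in C([0,T])\cap C^1((0,T])$ with $s(0)=0$ and $s(t)>0$ for $t\in(0,T]$. For such $s$ let $Q_{s,T}=\{(x,t):0<x<s(t),\,0<t<T\}$. The Fixed Boundary Neumann Problem on $s$ with flux $h$ asks for $U\in C(\overline{Q_{s,T}})\cap C^{2,1}(Q_{s,T})$ with $U_x$ continuous on $\overline{Q_{s,T}}\setminus\{t=0\}$ such that $U_t=U_{xx}$ in $Q_{s,T}$, $U(0,0)=0$, $U(s(t),t)=0$ for $t\in[0,T]$, and $-U_x(0,t)=h(t)$ for $t\in(0,T]$. Its solution is denoted $U^s$. (For such solutions, $\mathcal{R}(s)(t)$ coincides with $-\int_0^t U^s_x(s(z),z)\,dz$.) *)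

theory Defs
  imports "HOL-Analysis.Analysis"
begin

definition boundary_function :: "real \<Rightarrow> (real \<Rightarrow> real) \<Rightarrow> bool" where
  "boundary_function T s \<longleftrightarrow>
     continuous_on {0..T} s \<and>
     (\<exists>s'. (\<forall>t\<in>{0<..T}. (s has_real_derivative s' t) (at t within {0<..T}))
           \<and> continuous_on {0<..T} s') \<and>
     s 0 = 0 \<and> (\<forall>t\<in>{0<..T}. s t > 0)"

text \<open>The open domain Q_{s,T} and its closure (for a boundary function s, the closure of
  Q_{s,T} is exactly this set).\<close>
definition Qdom :: "real \<Rightarrow> (real \<Rightarrow> real) \<Rightarrow> (real \<times> real) set" where
  "Qdom T s = {(x,t). 0 < x \<and> x < s t \<and> 0 < t \<and> t < T}"

definition Qbar :: "real \<Rightarrow> (real \<Rightarrow> real) \<Rightarrow> (real \<times> real) set" where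
  "Qbar T s = {(x,t). 0 \<le> x \<and> x \<le> s t \<and> 0 \<le> t \<and> t \<le> T}"

definition FBNP :: "real \<Rightarrow> (real \<Rightarrow> real) \<Rightarrow> (real \<Rightarrow> real) \<Rightarrow> (real \<Rightarrow> real \<Rightarrow> real) \<Rightarrow> bool" where
  "FBNP T h s U \<longleftrightarrow>
     continuous_on (Qbar T s) (\<lambda>(x,t). U x t) \<and>
     (\<exists>Ux Uxx Ut.
        \<comment> \<open>U_x exists (one-sided at x=0, x=s(t)) and is continuous on closure minus {t=0}\<close>
        (\<forall>(x,t)\<in>Qbar T s. t > 0 \<longrightarrow>
            ((\<lambda>y. U y t) has_real_derivative Ux x t) (at x within {0..s t})) \<and>
        continuous_on (Qbar T s - {(x,t). t = 0}) (\<lambda>(x,t). Ux x t) \<and>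
        \<comment> \<open>C^{2,1} in Q\<close>
        (\<forall>(x,t)\<in>Qdom T s.
            ((\<lambda>y. Ux y t) has_real_derivative Uxx x t) (at x) \<and>
            ((\<lambda>\<tau>. U x \<tau>) has_real_derivative Ut x t) (at t)) \<and>
        continuous_on (Qdom T s) (\<lambda>(x,t). Uxx x t) \<and>
        continuous_on (Qdom T s) (\<lambda>(x,t). Ut x t) \<and>
        \<comment> \<open>heat equation and boundary conditions\<close>
        (\<forall>(x,t)\<in>Qdom T s. Ut x t = Uxx x t) \<and>
        U 0 0 = 0 \<and>
        (\<forall>t\<in>{0..T}. U (s t) t = 0) \<and>
        (\<forall>t\<in>{0<..T}. - Ux 0 t = h t))"

definition Rop :: "(real \<Rightarrow> real) \<Rightarrow> (real \<Rightarrow> real) \<Rightarrow> (real \<Rightarrow> real \<Rightarrow> real) \<Rightarrow> real \<Rightarrow> real" where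
  "Rop h s U t = integral {0..t} h - integral {0..s t} (\<lambda>x. U x t)"

end

theory Submission
  imports Defs
begin

(* The comparison rests on a weak minimum principle for the heat equation on the
   non-cylindrical domain Q_{s,T}: a solution W that is nonnegative on the free boundary
   x = s(t) and has W_x(0,t) <= 0 is nonnegative on the closure. It gives U^{s2} >= 0;
   applied on Q_{s1,T} to U^{s2} - U^{s1}, which is >= 0 on x = s1(t) and has zero flux
   at x = 0, it gives U^{s1} <= U^{s2} there. Hence
   int_0^{s1(t)} U^{s1} <= int_0^{s1(t)} U^{s2} <= int_0^{s2(t)} U^{s2}, which is the claim.
   The minimum principle is proved by perturbing W to W + eps (t - x), for which
   d_t - d_xx equals eps > 0 and the x-derivative at x = 0 is <= -eps, so that its minimum
   over Q_{s,t0} can only lie on the free boundary; then eps -> 0. *)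

lemma DERIV_left_endpoint_min_nonneg:
  fixes f :: "real \<Rightarrow> real"
  assumes "(f has_real_derivative D) (at a within {a..b})" "a < b"
    and "\<And>y. y \<in> {a..b} \<Longrightarrow> f a \<le> f y"
  shows "0 \<le> D"
proof -
  have "((\<lambda>y. (f y - f a) / (y - a)) \<longlongrightarrow> D) (at_right a)"
    using assms(1) has_field_derivative_iff at_within_Icc_at_right[OF assms(2)] by metis
  moreover have "eventually (\<lambda>y. 0 \<le> (f y - f a) / (y - a)) (at_right a)"
    unfolding eventually_at_right_field using assms(2,3) by (intro exI[of _ b]) auto
  ultimately show ?thesis by (rule tendsto_lowerbound) simp
qed

lemma DERIV_left_local_min_nonpos:
  fixes f :: "real \<Rightarrow> real"
  assumes "(f has_real_derivative D) (at x)" "eventually (\<lambda>y. f x \<le> f y) (at_left x)"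
  shows "D \<le> 0"
proof -
  have "(f has_real_derivative D) (at_left x)"
    using assms(1) by (rule DERIV_subset) simp
  then have "((\<lambda>y. (f y - f x) / (y - x)) \<longlongrightarrow> D) (at_left x)"
    by (simp add: has_field_derivative_iff)
  moreover have "eventually (\<lambda>y. y < x) (at_left x)"
    by (simp add: eventually_at_filter)
  with assms(2) have "eventually (\<lambda>y. (f y - f x) / (y - x) \<le> 0) (at_left x)"
    by eventually_elim (auto intro: divide_nonneg_neg)
  ultimately show ?thesis by (rule tendsto_upperbound) simp
qed

lemma DERIV2_local_min_nonneg:
  fixes f f' :: "real \<Rightarrow> real"
  assumes "a < x" "x < b"
    and f': "\<And>y. a < y \<Longrightarrow> y < b \<Longrightarrow> (f has_real_derivative f' y) (at y)"
    and f'': "(f' has_real_derivative D) (at x)"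
    and min: "\<And>y. a < y \<Longrightarrow> y < b \<Longrightarrow> f x \<le> f y"
  shows "0 \<le> D"
proof (rule ccontr)
  assume "\<not> 0 \<le> D"
  then obtain d where d: "d > 0" "\<And>h. 0 < h \<Longrightarrow> h < d \<Longrightarrow> f' (x + h) < f' x"
    using DERIV_neg_dec_right[OF f''] by force
  have "f' x = 0"
    by (rule DERIV_local_min[OF f'[OF assms(1,2)], of "min (x - a) (b - x)"])
      (use assms min in auto)
  define h where "h = min d (b - x) / 2"
  have h: "0 < h" "h < d" "x + h < b"
    using d assms(2) unfolding h_def by (auto simp: min_def field_simps)
  obtain z where z: "x < z" "z < x + h" "f (x + h) - f x = h * f' z"
    using MVT2[of x "x + h" f f'] f' h assms(1) by force
  have "f' z < 0" using d(2)[of "z - x"] z h \<open>f' x = 0\<close> by auto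
  then have "h * f' z < 0" using h(1) by (simp add: mult_pos_neg)
  with z(3) have "f (x + h) < f x" by simp
  with min[of "x + h"] h assms(1) show False by auto
qed

lemma compact_Qbar:
  assumes "continuous_on {0..T} s" "\<And>t. t \<in> {0..T} \<Longrightarrow> 0 \<le> s t"
  shows "compact (Qbar T s)"
proof -
  define \<phi> where "\<phi> = (\<lambda>(u, t). (u * s t, t :: real))"
  have "continuous_on ({0..1} \<times> {0..T}) (\<lambda>p. s (snd p))"
    by (rule continuous_on_compose2[OF assms(1)]) (auto simp: continuous_on_snd)
  then have "continuous_on ({0..1} \<times> {0..T}) \<phi>"
    unfolding \<phi>_def case_prod_unfold by (intro continuous_intros)
  then have "compact (\<phi> ` ({0..1} \<times> {0..T}))"
    by (intro compact_continuous_image compact_Times) auto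
  moreover have "\<phi> ` ({0..1} \<times> {0..T}) \<subseteq> Qbar T s"
    using assms(2) by (auto simp: \<phi>_def Qbar_def mult_left_le_one_le)
  moreover have "Qbar T s \<subseteq> \<phi> ` ({0..1} \<times> {0..T})"
  proof (rule subsetI, clarify)
    fix x t assume xt: "(x, t) \<in> Qbar T s"
    define u where "u = (if s t = 0 then 0 else x / s t)"
    have "(u, t) \<in> {0..1} \<times> {0..T}" "(x, t) = \<phi> (u, t)"
      using xt by (auto simp: u_def \<phi>_def Qbar_def)
    then show "(x, t) \<in> \<phi> ` ({0..1} \<times> {0..T})" by blast
  qed
  ultimately show ?thesis by (metis subset_antisym)
qed

lemma integral_le_integral_extended:
  fixes f g :: "real \<Rightarrow> real"
  assumes "a \<le> b" "b \<le> c" "continuous_on {a..b} f" "continuous_on {a..c} g"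
    and "\<And>x. x \<in> {a..b} \<Longrightarrow> f x \<le> g x" "\<And>x. x \<in> {b..c} \<Longrightarrow> 0 \<le> g x"
  shows "integral {a..b} f \<le> integral {a..c} g"
proof -
  have g_ab: "g integrable_on {a..b}"
    by (rule integrable_continuous_interval[OF continuous_on_subset[OF assms(4)]]) (use assms(2) in auto)
  have g_bc: "g integrable_on {b..c}"
    by (rule integrable_continuous_interval[OF continuous_on_subset[OF assms(4)]]) (use assms(1) in auto)
  have "integral {a..b} f \<le> integral {a..b} g"
    by (rule integral_le[OF integrable_continuous_interval[OF assms(3)] g_ab assms(5)])
  also have "\<dots> \<le> integral {a..b} g + integral {b..c} g"
    using integral_nonneg[OF g_bc assms(6)] by simp
  also have "\<dots> = integral {a..c} g"
    by (rule Henstock_Kurzweil_Integration.integral_combine[OF assms(1,2)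
          integrable_continuous_interval[OF assms(4)]])
  finally show ?thesis .
qed

lemma continuous_on_Qbar_slice:
  assumes "continuous_on (Qbar T s) (\<lambda>(x, t). U x t)" "t \<in> {0..T}"
  shows "continuous_on {0..s t} (\<lambda>x. U x t)"
proof -
  have "(\<lambda>x. (x, t)) ` {0..s t} \<subseteq> Qbar T s" using assms(2) by (auto simp: Qbar_def)
  moreover have "continuous_on {0..s t} (\<lambda>x. (x, t))" by (intro continuous_intros)
  ultimately show ?thesis
    using continuous_on_compose2[OF assms(1)] by fastforce
qed

locale boundary_domain =
  fixes T :: real and s :: "real \<Rightarrow> real"
  assumes T_pos: "0 < T"
    and s_cont: "continuous_on {0..T} s"
    and s_0: "s 0 = 0"
    and s_pos: "\<And>t. 0 < t \<Longrightarrow> t \<le> T \<Longrightarrow> 0 < s t"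
begin

lemma s_nonneg: "t \<in> {0..T} \<Longrightarrow> 0 \<le> s t"
  using s_0 s_pos by (cases "t = 0") (auto simp: less_eq_real_def)

lemma compact_Qbar_upto: "t0 \<le> T \<Longrightarrow> compact (Qbar t0 s)"
  by (rule compact_Qbar) (auto intro: continuous_on_subset[OF s_cont] s_nonneg)

lemma Qbar_upto_subset: "t0 \<le> T \<Longrightarrow> Qbar t0 s \<subseteq> Qbar T s"
  by (auto simp: Qbar_def)

lemma eventually_at_left_Qdom:
  assumes "(x, t) \<in> Qdom T s"
  shows "eventually (\<lambda>\<tau>. (x, \<tau>) \<in> Qdom T s) (at_left t)"
proof -
  have t: "0 < t" "t < T" and x: "0 < x" "x < s t" using assms by (auto simp: Qdom_def)
  have "isCont s t"
    using continuous_on_interior[OF s_cont] t by simp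
  then have "eventually (\<lambda>\<tau>. x < s \<tau>) (at t)"
    using x(2) by (auto intro: order_tendstoD(1) simp: isCont_def)
  then have "eventually (\<lambda>\<tau>. x < s \<tau>) (at_left t)"
    by (simp add: eventually_at_split)
  moreover have "eventually (\<lambda>\<tau>. 0 < \<tau> \<and> \<tau> < T) (at_left t)"
    unfolding eventually_at_left_field using t by (intro exI[of _ 0]) auto
  ultimately show ?thesis
    by eventually_elim (use x in \<open>auto simp: Qdom_def\<close>)
qed

end

lemma boundary_domain_if_boundary_function:
  "0 < T \<Longrightarrow> boundary_function T s \<Longrightarrow> boundary_domain T s"
  unfolding boundary_function_def boundary_domain_def by auto

locale heat_solution = boundary_domain +
  fixes W Wx Wxx Wt :: "real \<Rightarrow> real \<Rightarrow> real"
  assumes W_cont: "continuous_on (Qbar T s) (\<lambda>(x, t). W x t)"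
    and W_x: "\<And>x t. (x, t) \<in> Qbar T s \<Longrightarrow> 0 < t \<Longrightarrow>
      ((\<lambda>y. W y t) has_real_derivative Wx x t) (at x within {0..s t})"
    and W_xx: "\<And>x t. (x, t) \<in> Qdom T s \<Longrightarrow> ((\<lambda>y. Wx y t) has_real_derivative Wxx x t) (at x)"
    and W_t: "\<And>x t. (x, t) \<in> Qdom T s \<Longrightarrow> ((\<lambda>\<tau>. W x \<tau>) has_real_derivative Wt x t) (at t)"
    and heat_eq: "\<And>x t. (x, t) \<in> Qdom T s \<Longrightarrow> Wt x t = Wxx x t"
begin

lemma penalized_min_on_free_boundary:
  assumes flux: "\<And>t. 0 < t \<Longrightarrow> t \<le> T \<Longrightarrow> Wx 0 t \<le> 0"
    and "0 < \<epsilon>" "t0 < T" and x1t1: "(x1, t1) \<in> Qbar t0 s"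
    and min: "\<And>x t. (x, t) \<in> Qbar t0 s \<Longrightarrow> W x1 t1 + \<epsilon> * (t1 - x1) \<le> W x t + \<epsilon> * (t - x)"
  shows "x1 = s t1"
proof (rule ccontr)
  assume "x1 \<noteq> s t1"
  define Z where "Z x t = W x t + \<epsilon> * (t - x)" for x t
  have x1: "0 \<le> x1" "x1 < s t1" and "0 \<le> t1" "t1 \<le> t0"
    using x1t1 \<open>x1 \<noteq> s t1\<close> by (auto simp: Qbar_def)
  then have t1: "0 < t1" "t1 < T" using s_0 \<open>t0 < T\<close> by (auto simp: less_eq_real_def)
  have slice: "(y, t1) \<in> Qbar t0 s" if "y \<in> {0..s t1}" for y
    using that \<open>0 \<le> t1\<close> \<open>t1 \<le> t0\<close> by (simp add: Qbar_def)
  have Z_x: "((\<lambda>y. Z y t1) has_real_derivative Wx y t1 - \<epsilon>) (at y within {0..s t1})"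
    if "y \<in> {0..s t1}" for y
  proof -
    have "(y, t1) \<in> Qbar T s" using slice[OF that] Qbar_upto_subset[of t0] \<open>t0 < T\<close> by auto
    from W_x[OF this t1(1)] show ?thesis unfolding Z_def by (auto intro!: derivative_eq_intros)
  qed
  consider "x1 = 0" | "0 < x1" using x1 by linarith
  then show False
  proof cases
    case 1
    have "0 \<le> Wx 0 t1 - \<epsilon>"
      using DERIV_left_endpoint_min_nonneg[OF Z_x[of 0]] s_pos t1 min slice 1
      by (auto simp: Z_def)
    with flux[of t1] t1 \<open>0 < \<epsilon>\<close> show False by auto
  next
    case 2
    then have Q: "(x1, t1) \<in> Qdom T s" using x1 t1 by (simp add: Qdom_def)
    have "eventually (\<lambda>\<tau>. (x1, \<tau>) \<in> Qdom T s \<and> \<tau> < t1) (at_left t1)"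
      using eventually_at_left_Qdom[OF Q] by (simp add: eventually_conj eventually_at_filter)
    then have "eventually (\<lambda>\<tau>. Z x1 t1 \<le> Z x1 \<tau>) (at_left t1)"
      by eventually_elim (use min \<open>t1 \<le> t0\<close> in \<open>auto simp: Z_def Qdom_def Qbar_def\<close>)
    moreover have "((\<lambda>\<tau>. Z x1 \<tau>) has_real_derivative Wt x1 t1 + \<epsilon>) (at t1)"
      unfolding Z_def using W_t[OF Q] by (auto intro!: derivative_eq_intros)
    ultimately have Z_t: "Wt x1 t1 + \<epsilon> \<le> 0"
      using DERIV_left_local_min_nonpos by blast
    have "((\<lambda>y. Z y t1) has_real_derivative Wx y t1 - \<epsilon>) (at y)" if "0 < y" "y < s t1" for y
      using Z_x[of y] that at_within_interior[of y "{0..s t1}"] by auto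
    moreover have "((\<lambda>y. Wx y t1 - \<epsilon>) has_real_derivative Wxx x1 t1) (at x1)"
      using W_xx[OF Q] by (auto intro!: derivative_eq_intros)
    ultimately have Z_xx: "0 \<le> Wxx x1 t1"
      by (rule DERIV2_local_min_nonneg[OF 2 x1(2)]) (use min slice in \<open>auto simp: Z_def\<close>)
    from Z_t Z_xx heat_eq[OF Q] \<open>0 < \<epsilon>\<close> show False by simp
  qed
qed

lemma nonneg_before_T:
  assumes bdry: "\<And>t. t \<in> {0..T} \<Longrightarrow> 0 \<le> W (s t) t"
    and flux: "\<And>t. 0 < t \<Longrightarrow> t \<le> T \<Longrightarrow> Wx 0 t \<le> 0"
    and "(x0, t0) \<in> Qbar T s" and "t0 < T"
  shows "0 \<le> W x0 t0"
proof -
  have x0t0: "(x0, t0) \<in> Qbar t0 s" using \<open>(x0, t0) \<in> Qbar T s\<close> by (simp add: Qbar_def)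
  obtain L where L: "\<And>t. t \<in> {0..T} \<Longrightarrow> s t \<le> L"
    using continuous_attains_sup[OF compact_Icc _ s_cont] T_pos by fastforce
  have "- \<epsilon> * (L + t0) \<le> W x0 t0" if "0 < \<epsilon>" for \<epsilon>
  proof -
    have "continuous_on (Qbar t0 s) (\<lambda>(x, t). W x t + \<epsilon> * (t - x))"
      using continuous_on_subset[OF W_cont Qbar_upto_subset] \<open>t0 < T\<close>
      by (auto simp: case_prod_unfold intro!: continuous_intros)
    then obtain p1 where p1: "p1 \<in> Qbar t0 s"
      and min: "\<And>p. p \<in> Qbar t0 s \<Longrightarrow>
        (\<lambda>(x, t). W x t + \<epsilon> * (t - x)) p1 \<le> (\<lambda>(x, t). W x t + \<epsilon> * (t - x)) p"
      using continuous_attains_inf[OF compact_Qbar_upto[of t0]] x0t0 \<open>t0 < T\<close> by fastforce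
    obtain x1 t1 where p1_eq: "p1 = (x1, t1)" by fastforce
    have t1: "t1 \<in> {0..T}" using p1 p1_eq \<open>t0 < T\<close> by (auto simp: Qbar_def)
    have "x1 = s t1"
      using penalized_min_on_free_boundary[OF flux \<open>0 < \<epsilon>\<close> \<open>t0 < T\<close>, of x1 t1] p1 min p1_eq
      by fastforce
    then have "W (s t1) t1 + \<epsilon> * (t1 - s t1) \<le> W x0 t0 + \<epsilon> * (t0 - x0)"
      using min[OF x0t0] p1_eq by simp
    moreover have "- \<epsilon> * L \<le> \<epsilon> * (t1 - s t1)"
      using mult_left_mono[of "- L" "t1 - s t1" \<epsilon>] L[OF t1] t1 \<open>0 < \<epsilon>\<close> by simp
    moreover have "0 \<le> \<epsilon> * x0"
      using x0t0 \<open>0 < \<epsilon>\<close> by (simp add: Qbar_def)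
    ultimately show ?thesis using bdry[OF t1] by (simp add: algebra_simps)
  qed
  then have "eventually (\<lambda>\<epsilon>. - \<epsilon> * (L + t0) \<le> W x0 t0) (at_right 0)"
    by (simp add: eventually_at_filter)
  moreover have "((\<lambda>\<epsilon>. - \<epsilon> * (L + t0)) \<longlongrightarrow> 0) (at_right 0)"
    by (auto intro!: tendsto_eq_intros)
  ultimately show ?thesis
    by (intro tendsto_upperbound[of "\<lambda>\<epsilon>. - \<epsilon> * (L + t0)"]) auto
qed

lemma minimum_principle:
  assumes bdry: "\<And>t. t \<in> {0..T} \<Longrightarrow> 0 \<le> W (s t) t"
    and flux: "\<And>t. 0 < t \<Longrightarrow> t \<le> T \<Longrightarrow> Wx 0 t \<le> 0"
    and x0t0: "(x0, t0) \<in> Qbar T s"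
  shows "0 \<le> W x0 t0"
proof (cases "t0 < T")
  case True
  then show ?thesis using nonneg_before_T[OF bdry flux x0t0] by blast
next
  case False
  \<comment> \<open>The time derivative is only available below \<open>T\<close>: approach \<open>(x0, T)\<close> along \<open>\<gamma>\<close>.\<close>
  then have t0: "t0 = T" using x0t0 by (simp add: Qbar_def)
  have sT: "0 < s T" using s_pos T_pos by simp
  define \<gamma> where "\<gamma> t = (x0 * s t / s T, t)" for t
  have \<gamma>_Qbar: "\<gamma> t \<in> Qbar T s" if "t \<in> {0..T}" for t
  proof -
    have "x0 * s t \<le> s T * s t"
      using x0t0 t0 s_nonneg[OF that] by (intro mult_right_mono) (auto simp: Qbar_def)
    then show ?thesis
      using that s_nonneg[OF that] sT x0t0 by (auto simp: \<gamma>_def Qbar_def divide_le_eq mult.commute)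
  qed
  have "continuous_on {0..T} \<gamma>"
    unfolding \<gamma>_def using sT by (intro continuous_intros s_cont) auto
  then have "continuous_on {0..T} ((\<lambda>(x, t). W x t) \<circ> \<gamma>)"
    by (rule continuous_on_compose[OF _ continuous_on_subset[OF W_cont]]) (use \<gamma>_Qbar in auto)
  moreover have "((\<lambda>(x, t). W x t) \<circ> \<gamma>) T = W x0 t0"
    using sT t0 by (simp add: \<gamma>_def)
  ultimately have "(((\<lambda>(x, t). W x t) \<circ> \<gamma>) \<longlongrightarrow> W x0 t0) (at_left T)"
    using T_pos at_within_Icc_at_left[OF T_pos]
    by (metis atLeastAtMost_iff continuous_on_def order_refl less_imp_le)
  moreover have "eventually (\<lambda>t. 0 < t \<and> t < T) (at_left T)"
    unfolding eventually_at_left_field using T_pos by (intro exI[of _ 0]) auto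
  then have "eventually (\<lambda>t. 0 \<le> ((\<lambda>(x, t). W x t) \<circ> \<gamma>) t) (at_left T)"
    by eventually_elim (use nonneg_before_T[OF bdry flux] \<gamma>_Qbar in \<open>auto simp: \<gamma>_def\<close>)
  ultimately show ?thesis
    by (rule tendsto_lowerbound) (simp add: T_pos)
qed

end

lemma heat_solution_restrict:
  assumes "heat_solution T s' W Wx Wxx Wt" "boundary_domain T s" "\<forall>t\<in>{0..T}. s t \<le> s' t"
  shows "heat_solution T s W Wx Wxx Wt"
proof -
  interpret heat_solution T s' W Wx Wxx Wt by fact
  have Qbar: "Qbar T s \<subseteq> Qbar T s'"
    using assms(3) by (force simp: Qbar_def)
  have Qdom: "Qdom T s \<subseteq> Qdom T s'"
    using assms(3) by (auto simp: Qdom_def intro: less_le_trans)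
  show ?thesis
  proof (rule heat_solution.intro[OF assms(2)], unfold_locales)
    show "continuous_on (Qbar T s) (\<lambda>(x, t). W x t)"
      using continuous_on_subset[OF W_cont Qbar] .
    fix x t
    show "((\<lambda>y. W y t) has_real_derivative Wx x t) (at x within {0..s t})"
      if "(x, t) \<in> Qbar T s" "0 < t"
    proof (rule DERIV_subset)
      show "((\<lambda>y. W y t) has_real_derivative Wx x t) (at x within {0..s' t})"
        using W_x[of x t] Qbar that by blast
      show "{0..s t} \<subseteq> {0..s' t}"
        using assms(3) that by (auto simp: Qbar_def)
    qed
    assume "(x, t) \<in> Qdom T s"
    then have Q: "(x, t) \<in> Qdom T s'" using Qdom by blast
    show "((\<lambda>y. Wx y t) has_real_derivative Wxx x t) (at x)"
      by (rule W_xx[OF Q])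
    show "((\<lambda>\<tau>. W x \<tau>) has_real_derivative Wt x t) (at t)"
      by (rule W_t[OF Q])
    show "Wt x t = Wxx x t"
      by (rule heat_eq[OF Q])
  qed
qed

lemma heat_solution_diff:
  assumes "heat_solution T s U Ux Uxx Ut" "heat_solution T s V Vx Vxx Vt"
  shows "heat_solution T s (\<lambda>x t. U x t - V x t) (\<lambda>x t. Ux x t - Vx x t)
    (\<lambda>x t. Uxx x t - Vxx x t) (\<lambda>x t. Ut x t - Vt x t)"
proof -
  interpret U: heat_solution T s U Ux Uxx Ut by fact
  interpret V: heat_solution T s V Vx Vxx Vt by fact
  show ?thesis
  proof
    show "continuous_on (Qbar T s) (\<lambda>(x, t). U x t - V x t)"
      using continuous_on_diff[OF U.W_cont V.W_cont] by (simp add: case_prod_unfold)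
    fix x t
    show "((\<lambda>y. U y t - V y t) has_real_derivative Ux x t - Vx x t) (at x within {0..s t})"
      if "(x, t) \<in> Qbar T s" "0 < t"
      using U.W_x[OF that] V.W_x[OF that] by (rule DERIV_diff)
    assume Q: "(x, t) \<in> Qdom T s"
    show "((\<lambda>y. Ux y t - Vx y t) has_real_derivative Uxx x t - Vxx x t) (at x)"
      using U.W_xx[OF Q] V.W_xx[OF Q] by (rule DERIV_diff)
    show "((\<lambda>\<tau>. U x \<tau> - V x \<tau>) has_real_derivative Ut x t - Vt x t) (at t)"
      using U.W_t[OF Q] V.W_t[OF Q] by (rule DERIV_diff)
    show "Ut x t - Vt x t = Uxx x t - Vxx x t"
      using U.heat_eq[OF Q] V.heat_eq[OF Q] by simp
  qed
qed

lemma FBNP_heat_solution: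
  assumes "boundary_domain T s" "FBNP T h s U"
  obtains Ux Uxx Ut where "heat_solution T s U Ux Uxx Ut"
    and "\<And>t. t \<in> {0..T} \<Longrightarrow> U (s t) t = 0" and "\<And>t. 0 < t \<Longrightarrow> t \<le> T \<Longrightarrow> - Ux 0 t = h t"
proof -
  from assms(2) obtain Ux Uxx Ut where
    "continuous_on (Qbar T s) (\<lambda>(x, t). U x t)"
    "\<forall>(x, t)\<in>Qbar T s. 0 < t \<longrightarrow> ((\<lambda>y. U y t) has_real_derivative Ux x t) (at x within {0..s t})"
    "\<forall>(x, t)\<in>Qdom T s. ((\<lambda>y. Ux y t) has_real_derivative Uxx x t) (at x) \<and>
       ((\<lambda>\<tau>. U x \<tau>) has_real_derivative Ut x t) (at t)"
    "\<forall>(x, t)\<in>Qdom T s. Ut x t = Uxx x t"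
    "\<forall>t\<in>{0..T}. U (s t) t = 0" "\<forall>t\<in>{0<..T}. - Ux 0 t = h t"
    unfolding FBNP_def by blast
  moreover from this have "heat_solution T s U Ux Uxx Ut"
    using assms(1) by (auto simp: heat_solution_def heat_solution_axioms_def)
  ultimately show ?thesis using that by auto
qed

lemma FBNP_nonneg:
  assumes "boundary_domain T s" "FBNP T h s U" "\<And>t. 0 < t \<Longrightarrow> t \<le> T \<Longrightarrow> 0 \<le> h t"
    and "(x, t) \<in> Qbar T s"
  shows "0 \<le> U x t"
proof -
  obtain Ux Uxx Ut where "heat_solution T s U Ux Uxx Ut"
    and "\<And>t. t \<in> {0..T} \<Longrightarrow> U (s t) t = 0" and flux: "\<And>t. 0 < t \<Longrightarrow> t \<le> T \<Longrightarrow> - Ux 0 t = h t"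
    using FBNP_heat_solution[OF assms(1,2)] by blast
  moreover have "Ux 0 t \<le> 0" if "0 < t" "t \<le> T" for t
    using assms(3)[OF that] flux[OF that] by simp
  ultimately show ?thesis
    using heat_solution.minimum_principle[of T s U Ux Uxx Ut] assms(4) by simp
qed

lemma FBNP_mono_boundary:
  assumes "boundary_domain T s1" "boundary_domain T s2" "FBNP T h s1 U1" "FBNP T h s2 U2"
    and "\<And>t. 0 < t \<Longrightarrow> t \<le> T \<Longrightarrow> 0 \<le> h t" "\<forall>t\<in>{0..T}. s1 t \<le> s2 t"
    and "(x, t) \<in> Qbar T s1"
  shows "U1 x t \<le> U2 x t"
proof -
  obtain U1x U1xx U1t where U1: "heat_solution T s1 U1 U1x U1xx U1t"
    and bdry1: "\<And>t. t \<in> {0..T} \<Longrightarrow> U1 (s1 t) t = 0"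
    and flux1: "\<And>t. 0 < t \<Longrightarrow> t \<le> T \<Longrightarrow> - U1x 0 t = h t"
    using FBNP_heat_solution[OF assms(1,3)] by blast
  obtain U2x U2xx U2t where U2: "heat_solution T s2 U2 U2x U2xx U2t"
    and flux2: "\<And>t. 0 < t \<Longrightarrow> t \<le> T \<Longrightarrow> - U2x 0 t = h t"
    by (rule FBNP_heat_solution[OF assms(2,4)]) (rule that)
  have diff: "heat_solution T s1 (\<lambda>x t. U2 x t - U1 x t) (\<lambda>x t. U2x x t - U1x x t)
      (\<lambda>x t. U2xx x t - U1xx x t) (\<lambda>x t. U2t x t - U1t x t)"
    by (rule heat_solution_diff[OF heat_solution_restrict[OF U2 assms(1,6)] U1])
  have "0 \<le> U2 (s1 t) t - U1 (s1 t) t" if "t \<in> {0..T}" for t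
  proof -
    have "(s1 t, t) \<in> Qbar T s2"
      using that assms(6) boundary_domain.s_nonneg[OF assms(1) that] by (simp add: Qbar_def)
    then show ?thesis
      using FBNP_nonneg[OF assms(2,4,5)] bdry1[OF that] by simp
  qed
  moreover have "U2x 0 t - U1x 0 t \<le> 0" if "0 < t" "t \<le> T" for t
    using flux1[OF that] flux2[OF that] by simp
  ultimately have "0 \<le> U2 x t - U1 x t"
    by (rule heat_solution.minimum_principle[OF diff _ _ assms(7)])
  then show ?thesis by simp
qed

theorem lemma1:
  fixes T :: real and h :: "real \<Rightarrow> real"
    and U :: "(real \<Rightarrow> real) \<Rightarrow> real \<Rightarrow> real \<Rightarrow> real"
    and s1 s2 :: "real \<Rightarrow> real"
  assumes "T > 0"
    and "continuous_on {0..T} h"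
    and "\<forall>t\<in>{0..T}. h t > 0"
    and "\<forall>s. boundary_function T s \<longrightarrow> FBNP T h s (U s)"
    and "boundary_function T s1" and "boundary_function T s2"
    and "\<forall>t\<in>{0..T}. s1 t \<le> s2 t"
  shows "\<forall>t\<in>{0..T}. Rop h s1 (U s1) t \<ge> Rop h s2 (U s2) t"
proof
  fix t assume t: "t \<in> {0..T}"
  have dom: "boundary_domain T s1" "boundary_domain T s2"
    using assms(1,5,6) by (auto intro: boundary_domain_if_boundary_function)
  have FBNP: "FBNP T h s1 (U s1)" "FBNP T h s2 (U s2)"
    using assms(4-6) by auto
  \<comment> \<open>Only the sign of \<open>h\<close> matters.\<close>
  have h_nonneg: "\<And>t. 0 < t \<Longrightarrow> t \<le> T \<Longrightarrow> 0 \<le> h t"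
    using assms(3) by (auto intro: less_imp_le)
  have "integral {0..s1 t} (\<lambda>x. U s1 x t) \<le> integral {0..s2 t} (\<lambda>x. U s2 x t)"
  proof (rule integral_le_integral_extended)
    show "0 \<le> s1 t" "s1 t \<le> s2 t"
      using boundary_domain.s_nonneg[OF dom(1) t] assms(7) t by auto
    show "continuous_on {0..s1 t} (\<lambda>x. U s1 x t)" "continuous_on {0..s2 t} (\<lambda>x. U s2 x t)"
      using FBNP t by (auto intro: continuous_on_Qbar_slice simp: FBNP_def)
    show "U s1 x t \<le> U s2 x t" if "x \<in> {0..s1 t}" for x
      using FBNP_mono_boundary[OF dom FBNP h_nonneg assms(7)] that t by (simp add: Qbar_def)
    show "0 \<le> U s2 x t" if "x \<in> {s1 t..s2 t}" for x
      using FBNP_nonneg[OF dom(2) FBNP(2) h_nonneg] that t \<open>0 \<le> s1 t\<close> by (simp add: Qbar_def)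
  qed
  then show "Rop h s1 (U s1) t \<ge> Rop h s2 (U s2) t"
    by (simp add: Rop_def)
qed

end
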